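(* Let $n$ be a positive integer and let $\log n/n \ll p = p(n) \le 1$. Let $\varepsilon > 0$ be an (arbitrarily small) constant, let $c > 0$ be a constant, and let $D = (V,E) \in \mathcal{D}(n,p)$. For a set $Y \subseteq V$, let $B_Y$ denote the set of all vertices $u \in V \setminus Y$ for which $|\deg^+_D(u,Y) - |Y|p| \ge \varepsilon |Y| p$ or $|\deg^-_D(u,Y) - |Y|p| \ge \varepsilon |Y| p$. Let $b = \max\{|B_Y| : Y \subseteq V,\ |Y| \ge cn\}$. Then a.a.s. $b \le p^{-1}\log n$.
   Context: $\mathcal{D}(n,p)$ is the random digraph on $[n]$ where each ordered pair $(u,v)$, $u\ne v$, is an arc independently with probability $p$. $\deg^+_D(u,Y)$ is the number of $y \in Y$ with $(u,y)$ an arc, $\deg^-_D(u,Y)$ the number of $y\in Y$ with $(y,u)$ an arc. a.a.s. means with probability tending to $1$ as $n\to\infty$; $f \ll g$ means $f/g \to 0$; $\log$ is natural. *)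

theory Defs
  imports "HOL-Analysis.Analysis" "HOL-Library.Landau_Symbols"
begin

definition possible_arcs :: "nat \<Rightarrow> (nat \<times> nat) set" where
  "possible_arcs n = {(u,v). u < n \<and> v < n \<and> u \<noteq> v}"

definition dnp_weight :: "nat \<Rightarrow> real \<Rightarrow> (nat \<times> nat) set \<Rightarrow> real" where
  "dnp_weight n p E = p ^ card E * (1 - p) ^ (card (possible_arcs n) - card E)"

text \<open>Probability that the random digraph D(n,p) (given by its arc set) has property P.\<close>
definition dnp_prob :: "nat \<Rightarrow> real \<Rightarrow> ((nat \<times> nat) set \<Rightarrow> bool) \<Rightarrow> real" where
  "dnp_prob n p P = (\<Sum>E \<in> {E. E \<subseteq> possible_arcs n \<and> P E}. dnp_weight n p E)"

definition out_deg :: "(nat \<times> nat) set \<Rightarrow> nat \<Rightarrow> nat set \<Rightarrow> nat" where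
  "out_deg E u Y = card {y \<in> Y. (u, y) \<in> E}"

definition in_deg :: "(nat \<times> nat) set \<Rightarrow> nat \<Rightarrow> nat set \<Rightarrow> nat" where
  "in_deg E u Y = card {y \<in> Y. (y, u) \<in> E}"

definition bad_set :: "nat \<Rightarrow> real \<Rightarrow> real \<Rightarrow> (nat \<times> nat) set \<Rightarrow> nat set \<Rightarrow> nat set" where
  "bad_set n p \<epsilon> E Y = {u \<in> {..<n} - Y.
      \<bar>real (out_deg E u Y) - real (card Y) * p\<bar> \<ge> \<epsilon> * real (card Y) * p \<or>
      \<bar>real (in_deg E u Y) - real (card Y) * p\<bar> \<ge> \<epsilon> * real (card Y) * p}"

end

theory Submission
  imports Defs "HOL-Library.FuncSet"
begin

text \<open>Fix \<open>Y\<close> with \<open>|Y| \<ge> cn\<close>. The out- and in-degree of a vertex \<open>u \<notin> Y\<close> into \<open>Y\<close> are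
  \<open>Bin(|Y|, p)\<close> variables, and different vertices \<open>u\<close> read disjoint sets of arcs. Hence, for
  \<open>k\<close> vertices outside \<open>Y\<close> and a prescribed degree (out or in) and direction of deviation for
  each, the probability that all of them deviate by \<open>e |Y| p\<close> factorises, and the exponential
  moment method bounds it by \<open>exp (-e\<^sup>2 c n p / 4)\<^sup>k\<close>. A union bound over the \<open>2\<^sup>n\<close> sets \<open>Y\<close>,
  the at most \<open>n\<^sup>k\<close> sets of \<open>k\<close> vertices and the \<open>4\<^sup>k\<close> patterns gives
  \<open>P(b \<ge> k) \<le> 2\<^sup>n (4 n exp (-e\<^sup>2 c n p / 4))\<^sup>k\<close>, which for \<open>k > log n / p\<close> is at most \<open>exp (-n)\<close>
  because \<open>log n = o(np)\<close>.\<close>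

definition bernoulli_weight :: "'a set \<Rightarrow> real \<Rightarrow> 'a set \<Rightarrow> real" where
  "bernoulli_weight N p E = (\<Prod>a\<in>E. p) * (\<Prod>a\<in>N - E. 1 - p)"

lemma bernoulli_weight_nonneg: "0 \<le> p \<Longrightarrow> p \<le> 1 \<Longrightarrow> 0 \<le> bernoulli_weight N p E"
  unfolding bernoulli_weight_def by (intro mult_nonneg_nonneg prod_nonneg) auto

lemma sum_bernoulli_weight_prod:
  fixes \<phi> :: "'a \<Rightarrow> bool \<Rightarrow> real"
  assumes N: "finite N" and A: "A \<subseteq> N"
  shows "(\<Sum>E\<in>Pow N. bernoulli_weight N p E * (\<Prod>a\<in>A. \<phi> a (a \<in> E)))
       = (\<Prod>a\<in>A. p * \<phi> a True + (1 - p) * \<phi> a False)"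
proof -
  define \<psi> where "\<psi> a b = (if a \<in> A then \<phi> a b else 1)" for a b
  have extend: "(\<Prod>a\<in>A. f a) = (\<Prod>a\<in>N. if a \<in> A then f a else 1)" for f :: "'a \<Rightarrow> real"
    by (rule prod.mono_neutral_cong_left[OF N A]) auto
  have "bernoulli_weight N p E * (\<Prod>a\<in>A. \<phi> a (a \<in> E))
      = (\<Prod>a\<in>E. p * \<psi> a True) * (\<Prod>a\<in>N - E. (1 - p) * \<psi> a False)" if "E \<subseteq> N" for E
  proof -
    have "(\<Prod>a\<in>A. \<phi> a (a \<in> E)) = (\<Prod>a\<in>E. \<psi> a True) * (\<Prod>a\<in>N - E. \<psi> a False)"
      unfolding extend prod.subset_diff[OF that N] mult.commute[of "prod _ (N - E)"]
      by (intro arg_cong2[where f="(*)"] prod.cong) (auto simp: \<psi>_def)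
    then show ?thesis unfolding bernoulli_weight_def prod.distrib by (simp only: ac_simps)
  qed
  then have "(\<Sum>E\<in>Pow N. bernoulli_weight N p E * (\<Prod>a\<in>A. \<phi> a (a \<in> E)))
      = (\<Prod>a\<in>N. p * \<psi> a True + (1 - p) * \<psi> a False)"
    by (simp add: prod_add[OF N])
  also have "\<dots> = (\<Prod>a\<in>A. p * \<phi> a True + (1 - p) * \<phi> a False)"
    unfolding extend by (intro prod.cong) (auto simp: \<psi>_def)
  finally show ?thesis .
qed

lemma sum_bernoulli_weight_prod_inj:
  fixes \<phi> :: "'i \<Rightarrow> bool \<Rightarrow> real"
  assumes N: "finite N" and g: "inj_on g I" "g ` I \<subseteq> N"
  shows "(\<Sum>E\<in>Pow N. bernoulli_weight N p E * (\<Prod>i\<in>I. \<phi> i (g i \<in> E)))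
       = (\<Prod>i\<in>I. p * \<phi> i True + (1 - p) * \<phi> i False)"
proof -
  define \<phi>' where "\<phi>' a = \<phi> (inv_into I g a)" for a
  have "(\<Prod>i\<in>I. \<phi> i (g i \<in> E)) = (\<Prod>a\<in>g ` I. \<phi>' a (a \<in> E))" for E
    using g(1) by (simp add: prod.reindex \<phi>'_def)
  moreover have "(\<Prod>i\<in>I. p * \<phi> i True + (1 - p) * \<phi> i False)
      = (\<Prod>a\<in>g ` I. p * \<phi>' a True + (1 - p) * \<phi>' a False)"
    using g(1) by (simp add: prod.reindex \<phi>'_def)
  ultimately show ?thesis by (simp add: sum_bernoulli_weight_prod[OF N g(2)])
qed

lemma sum_bernoulli_weight: "finite N \<Longrightarrow> (\<Sum>E\<in>Pow N. bernoulli_weight N p E) = 1"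
  using sum_bernoulli_weight_prod[of N "{}"] by simp

lemma finite_possible_arcs: "finite (possible_arcs n)"
  unfolding possible_arcs_def
  by (rule finite_subset[of _ "{..<n} \<times> {..<n}"]) auto

lemma dnp_prob_eq_sum_Pow:
  "dnp_prob n p P = (\<Sum>E\<in>Pow (possible_arcs n).
      if P E then bernoulli_weight (possible_arcs n) p E else 0)"
proof -
  have "dnp_weight n p E = bernoulli_weight (possible_arcs n) p E" if "E \<subseteq> possible_arcs n" for E
    using that finite_possible_arcs[of n]
    by (simp add: dnp_weight_def bernoulli_weight_def card_Diff_subset finite_subset)
  then show ?thesis
    unfolding dnp_prob_def sum.inter_filter[OF finite_Pow_iff[THEN iffD2, OF finite_possible_arcs], symmetric]
    by (intro sum.cong) auto
qed

lemma dnp_prob_nonneg: "0 \<le> p \<Longrightarrow> p \<le> 1 \<Longrightarrow> 0 \<le> dnp_prob n p P"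
  unfolding dnp_prob_eq_sum_Pow by (intro sum_nonneg) (simp add: bernoulli_weight_nonneg)

lemma dnp_prob_not: "dnp_prob n p (\<lambda>E. \<not> P E) = 1 - dnp_prob n p P"
proof -
  have "dnp_prob n p P + dnp_prob n p (\<lambda>E. \<not> P E)
      = (\<Sum>E\<in>Pow (possible_arcs n). bernoulli_weight (possible_arcs n) p E)"
    unfolding dnp_prob_eq_sum_Pow sum.distrib[symmetric] by (intro sum.cong) auto
  then show ?thesis using sum_bernoulli_weight[OF finite_possible_arcs] by simp
qed

lemma dnp_prob_union_bound:
  assumes "0 \<le> p" "p \<le> 1" "finite I" "\<And>E. P E \<Longrightarrow> \<exists>i\<in>I. Q i E"
  shows "dnp_prob n p P \<le> (\<Sum>i\<in>I. dnp_prob n p (Q i))"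
proof -
  let ?w = "bernoulli_weight (possible_arcs n) p"
  have "(if P E then ?w E else 0) \<le> (\<Sum>i\<in>I. if Q i E then ?w E else 0)" for E
  proof (cases "P E")
    case True
    then obtain i where i: "i \<in> I" "Q i E" using assms(4) by blast
    have "(if Q i E then ?w E else 0) \<le> (\<Sum>i\<in>I. if Q i E then ?w E else 0)"
      using i assms by (intro member_le_sum) (auto simp: bernoulli_weight_nonneg)
    then show ?thesis using True i by simp
  qed (use assms in \<open>auto intro!: sum_nonneg simp: bernoulli_weight_nonneg\<close>)
  then show ?thesis
    unfolding dnp_prob_eq_sum_Pow by (subst sum.swap) (rule sum_mono)
qed

lemma dnp_prob_mono:
  assumes "0 \<le> p" "p \<le> 1" "\<And>E. P E \<Longrightarrow> Q E"
  shows "dnp_prob n p P \<le> dnp_prob n p Q"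
  using dnp_prob_union_bound[of p "{()}" P "\<lambda>_. Q" n] assms by simp

lemma dnp_prob_le_expectation:
  assumes "0 \<le> p" "p \<le> 1" "\<And>E. Q E \<Longrightarrow> 1 \<le> F E" "\<And>E. 0 \<le> F E"
  shows "dnp_prob n p Q \<le> (\<Sum>E\<in>Pow (possible_arcs n). bernoulli_weight (possible_arcs n) p E * F E)"
  unfolding dnp_prob_eq_sum_Pow
proof (intro sum_mono)
  fix E
  have "0 \<le> bernoulli_weight (possible_arcs n) p E" using assms(1,2) by (rule bernoulli_weight_nonneg)
  then show "(if Q E then bernoulli_weight (possible_arcs n) p E else 0)
      \<le> bernoulli_weight (possible_arcs n) p E * F E"
    using assms(3,4)[of E] mult_left_mono[of 1 "F E"] by auto
qed

lemma exp_pm_le_quadratic: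
  fixes l s :: real
  assumes "0 \<le> l" "l \<le> 1" "s = 1 \<or> s = -1"
  shows "exp (l * s) \<le> 1 + l * s + l^2"
  using assms(3)
proof
  assume "s = 1" then show ?thesis using exp_bound[OF assms(1,2)] by simp
next
  assume s: "s = -1"
  have "exp (-l) = 1 / exp l" by (simp add: exp_minus field_simps)
  also have "\<dots> \<le> 1 / (1 + l)" using assms by (intro divide_left_mono) auto
  also have "\<dots> \<le> 1 - l + l^2"
  proof -
    have "1 \<le> (1 - l + l^2) * (1 + l)"
      using assms by (simp add: algebra_simps power2_eq_square power3_eq_cube)
    then show ?thesis using assms by (simp add: divide_le_eq)
  qed
  finally show ?thesis using s by simp
qed

text \<open>The Chernoff bound for a deviation by \<open>e m p\<close> of a \<open>Bin(m,p)\<close> variable in direction \<open>s\<close>: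
  the exponential moment at \<open>l = e/2\<close>, discounted by \<open>exp (l (s m p + e m p))\<close>.\<close>
lemma binomial_exp_moment_bound:
  fixes p e s :: real and m :: nat
  assumes p: "0 \<le> p" "p \<le> 1" and e: "0 < e" "e \<le> 1" and s: "s = 1 \<or> s = -1"
  shows "exp (-(e/2) * (s * m * p + e * m * p)) * (p * exp (e/2 * s) + (1 - p)) ^ m
       \<le> exp (-(m * p * e^2 / 4))"
proof -
  define l where "l = e/2"
  have l: "0 \<le> l" "l \<le> 1" using e by (auto simp: l_def)
  have "p * exp (l * s) + (1 - p) = 1 + p * (exp (l * s) - 1)" by (simp add: algebra_simps)
  also have "\<dots> \<le> exp (p * (exp (l * s) - 1))" by (rule exp_ge_add_one_self)
  finally have "(p * exp (l * s) + (1 - p)) ^ m \<le> exp (p * (exp (l * s) - 1)) ^ m"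
    using p by (intro power_mono) (auto intro: add_nonneg_nonneg)
  then have "exp (-l * (s * m * p + e * m * p)) * (p * exp (l * s) + (1 - p)) ^ m
      \<le> exp (-l * (s * m * p + e * m * p)) * exp (m * (p * (exp (l * s) - 1)))"
    by (simp add: exp_of_nat_mult)
  also have "\<dots> = exp (m * p * (exp (l * s) - 1 - l * s - l * e))"
    by (simp add: exp_add[symmetric] algebra_simps)
  also have "\<dots> \<le> exp (m * p * (l^2 - l * e))"
    using exp_pm_le_quadratic[OF l s] p by (intro exp_le_cancel_iff[THEN iffD2] mult_left_mono) auto
  also have "l^2 - l * e = -(e^2/4)" by (simp add: l_def power2_eq_square)
  finally show ?thesis by (simp add: l_def)
qed

definition oriented_arc :: "bool \<Rightarrow> nat \<Rightarrow> nat \<Rightarrow> nat \<times> nat" where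
  "oriented_arc out u y = (if out then (u, y) else (y, u))"

definition deg_towards :: "(nat \<times> nat) set \<Rightarrow> bool \<Rightarrow> nat \<Rightarrow> nat set \<Rightarrow> nat" where
  "deg_towards E out u Y = card {y \<in> Y. oriented_arc out u y \<in> E}"

lemma deg_towards_True: "deg_towards E True u Y = out_deg E u Y"
  and deg_towards_False: "deg_towards E False u Y = in_deg E u Y"
  by (simp_all add: deg_towards_def oriented_arc_def out_deg_def in_deg_def)

lemma expectation_prod_exp_deg_towards:
  fixes t :: "nat \<Rightarrow> real"
  assumes Y: "Y \<subseteq> {..<n}" and S: "S \<subseteq> {..<n} - Y"
  shows "(\<Sum>E\<in>Pow (possible_arcs n). bernoulli_weight (possible_arcs n) p E
            * (\<Prod>u\<in>S. exp (t u * real (deg_towards E (out u) u Y))))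
       = (\<Prod>u\<in>S. (p * exp (t u) + (1 - p)) ^ card Y)"
proof -
  have fin: "finite Y" "finite S" using Y S by (auto intro: finite_subset)
  define g where "g i = oriented_arc (out (fst i)) (fst i) (snd i)" for i
  define \<phi> where "\<phi> i b = exp (t (fst i) * of_bool b)" for i :: "nat \<times> nat" and b
  have "exp (t u * real (deg_towards E (out u) u Y)) = (\<Prod>y\<in>Y. \<phi> (u, y) (g (u, y) \<in> E))" for u E
    using fin by (simp add: deg_towards_def \<phi>_def g_def exp_sum[symmetric] sum_distrib_left[symmetric]
        Int_def)
  then have "(\<Prod>u\<in>S. exp (t u * real (deg_towards E (out u) u Y))) = (\<Prod>i\<in>S \<times> Y. \<phi> i (g i \<in> E))" for E
    by (simp add: prod.cartesian_product case_prod_beta')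
  moreover have "(\<Sum>E\<in>Pow (possible_arcs n). bernoulli_weight (possible_arcs n) p E
            * (\<Prod>i\<in>S \<times> Y. \<phi> i (g i \<in> E)))
       = (\<Prod>i\<in>S \<times> Y. p * \<phi> i True + (1 - p) * \<phi> i False)"
    \<comment> \<open>the arcs used by distinct vertices of \<open>S\<close> are distinct because \<open>S\<close> and \<open>Y\<close> are disjoint\<close>
  proof (rule sum_bernoulli_weight_prod_inj[OF finite_possible_arcs])
    show "inj_on g (S \<times> Y)"
      using S unfolding inj_on_def g_def oriented_arc_def by auto
    show "g ` (S \<times> Y) \<subseteq> possible_arcs n"
      using S Y unfolding possible_arcs_def g_def oriented_arc_def by auto
  qed
  moreover have "(\<Prod>i\<in>S \<times> Y. p * \<phi> i True + (1 - p) * \<phi> i False)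
      = (\<Prod>u\<in>S. (p * exp (t u) + (1 - p)) ^ card Y)"
    using prod.cartesian_product[of "\<lambda>u y. p * exp (t u) + (1 - p)" Y S]
    by (simp add: \<phi>_def case_prod_beta')
  ultimately show ?thesis by simp
qed

definition sign_of :: "bool \<Rightarrow> real" where
  "sign_of up = (if up then 1 else -1)"

text \<open>The pattern \<open>(out, up)\<close> selects the out- or in-degree of \<open>u\<close> into \<open>Y\<close> and the direction
  (above or below the mean \<open>|Y| p\<close>) of its deviation.\<close>
definition deviates :: "real \<Rightarrow> real \<Rightarrow> (nat \<times> nat) set \<Rightarrow> nat set \<Rightarrow> nat \<Rightarrow> bool \<times> bool \<Rightarrow> bool" where
  "deviates e p E Y u d \<longleftrightarrow>
     e * real (card Y) * p \<le> sign_of (snd d) * (real (deg_towards E (fst d) u Y) - real (card Y) * p)"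

lemma dnp_prob_all_deviate_le:
  assumes Y: "Y \<subseteq> {..<n}" and S: "S \<subseteq> {..<n} - Y"
    and p: "0 \<le> p" "p \<le> 1" and e: "0 < e" "e \<le> 1"
  shows "dnp_prob n p (\<lambda>E. \<forall>u\<in>S. deviates e p E Y u (\<sigma> u))
       \<le> exp (-(real (card Y) * p * e^2 / 4)) ^ card S"
proof -
  define l where "l = e / 2"
  define m where "m = card Y"
  define s where "s u = sign_of (snd (\<sigma> u))" for u
  define out where "out u = fst (\<sigma> u)" for u
  define C where "C u = exp (-l * (s u * m * p + e * m * p))" for u
  define F where "F E = (\<Prod>u\<in>S. C u * exp (l * s u * real (deg_towards E (out u) u Y)))" for E
  let ?w = "bernoulli_weight (possible_arcs n) p"
  have "dnp_prob n p (\<lambda>E. \<forall>u\<in>S. deviates e p E Y u (\<sigma> u)) \<le> (\<Sum>E\<in>Pow (possible_arcs n). ?w E * F E)"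
  proof (rule dnp_prob_le_expectation[OF p])
    fix E assume dev: "\<forall>u\<in>S. deviates e p E Y u (\<sigma> u)"
    have "1 \<le> C u * exp (l * s u * real (deg_towards E (out u) u Y))" if "u \<in> S" for u
    proof -
      have "e * m * p \<le> s u * (real (deg_towards E (out u) u Y) - m * p)"
        using dev that by (simp add: deviates_def s_def out_def m_def)
      then have "0 \<le> l * (s u * (real (deg_towards E (out u) u Y) - m * p) - e * m * p)"
        using e by (simp add: l_def)
      then show ?thesis by (simp add: C_def exp_add[symmetric] algebra_simps)
    qed
    then show "1 \<le> F E" unfolding F_def by (intro prod_ge_1) auto
  qed (simp add: F_def C_def prod_nonneg)
  also have "\<dots> = (\<Prod>u\<in>S. C u) * (\<Sum>E\<in>Pow (possible_arcs n).
      ?w E * (\<Prod>u\<in>S. exp (l * s u * real (deg_towards E (out u) u Y))))"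
    by (simp add: F_def prod.distrib sum_distrib_left ac_simps)
  also have "\<dots> = (\<Prod>u\<in>S. C u * (p * exp (l * s u) + (1 - p)) ^ m)"
    by (simp add: expectation_prod_exp_deg_towards[OF Y S] prod.distrib m_def)
  also have "\<dots> \<le> (\<Prod>u\<in>S. exp (-(m * p * e^2 / 4)))"
  proof (rule prod_mono)
    fix u
    have "s u = 1 \<or> s u = -1" by (simp add: s_def sign_of_def)
    from binomial_exp_moment_bound[OF p e this, of m]
    have "C u * (p * exp (l * s u) + (1 - p)) ^ m \<le> exp (-(m * p * e^2 / 4))"
      unfolding C_def l_def by (simp add: ac_simps)
    moreover have "0 \<le> C u * (p * exp (l * s u) + (1 - p)) ^ m"
      using p unfolding C_def by (intro mult_nonneg_nonneg zero_le_power) (auto intro: add_nonneg_nonneg)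
    ultimately show "0 \<le> C u * (p * exp (l * s u) + (1 - p)) ^ m
        \<and> C u * (p * exp (l * s u) + (1 - p)) ^ m \<le> exp (-(m * p * e^2 / 4))" by simp
  qed
  finally show ?thesis by (simp add: m_def)
qed

lemma bad_set_deviates:
  assumes u: "u \<in> bad_set n p \<epsilon> E Y" and e: "e \<le> \<epsilon>" and p: "0 \<le> p"
  shows "\<exists>d. deviates e p E Y u d"
proof -
  define m where "m = real (card Y)"
  have em: "e * m * p \<le> \<epsilon> * m * p"
    using e p by (intro mult_right_mono) (auto simp: m_def)
  from u consider "\<epsilon> * m * p \<le> \<bar>real (out_deg E u Y) - m * p\<bar>"
    | "\<epsilon> * m * p \<le> \<bar>real (in_deg E u Y) - m * p\<bar>"
    unfolding bad_set_def m_def by auto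
  then show ?thesis
  proof cases
    case 1
    then have "deviates e p E Y u (True, m * p \<le> out_deg E u Y)"
      using em by (auto simp: deviates_def deg_towards_True sign_of_def m_def)
    then show ?thesis ..
  next
    case 2
    then have "deviates e p E Y u (False, m * p \<le> in_deg E u Y)"
      using em by (auto simp: deviates_def deg_towards_False sign_of_def m_def)
    then show ?thesis ..
  qed
qed

lemma card_PiE_UNIV_bool_bool: "finite S \<Longrightarrow> card (S \<rightarrow>\<^sub>E (UNIV :: (bool \<times> bool) set)) = 4 ^ card S"
  by (simp add: card_PiE UNIV_Times_UNIV[symmetric] card_cartesian_product del: UNIV_Times_UNIV)

lemma dnp_prob_subset_bad_set_le:
  assumes Y: "Y \<subseteq> {..<n}" and S: "S \<subseteq> {..<n} - Y"
    and p: "0 \<le> p" "p \<le> 1" and e: "0 < e" "e \<le> 1" "e \<le> \<epsilon>"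
  shows "dnp_prob n p (\<lambda>E. S \<subseteq> bad_set n p \<epsilon> E Y)
       \<le> (4 * exp (-(real (card Y) * p * e^2 / 4))) ^ card S"
proof -
  have fin: "finite S" using S by (auto intro: finite_subset)
  let ?\<Sigma> = "S \<rightarrow>\<^sub>E (UNIV :: (bool \<times> bool) set)"
  have "dnp_prob n p (\<lambda>E. S \<subseteq> bad_set n p \<epsilon> E Y)
      \<le> (\<Sum>\<sigma>\<in>?\<Sigma>. dnp_prob n p (\<lambda>E. \<forall>u\<in>S. deviates e p E Y u (\<sigma> u)))"
  proof (rule dnp_prob_union_bound[OF p])
    show "finite ?\<Sigma>" using fin by (simp add: finite_PiE)
    fix E assume "S \<subseteq> bad_set n p \<epsilon> E Y"
    then have "\<forall>u\<in>S. \<exists>d. deviates e p E Y u d" using bad_set_deviates[OF _ e(3) p(1)] by blast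
    then obtain \<sigma> where "\<forall>u\<in>S. deviates e p E Y u (\<sigma> u)" by metis
    then show "\<exists>\<sigma>\<in>?\<Sigma>. \<forall>u\<in>S. deviates e p E Y u (\<sigma> u)"
      by (intro bexI[of _ "restrict \<sigma> S"]) auto
  qed
  also have "\<dots> \<le> real (card ?\<Sigma>) * exp (-(real (card Y) * p * e^2 / 4)) ^ card S"
    using dnp_prob_all_deviate_le[OF Y S p e(1,2)] by (intro sum_bounded_above)
  also have "\<dots> = (4 * exp (-(real (card Y) * p * e^2 / 4))) ^ card S"
    using fin by (simp add: card_PiE_UNIV_bool_bool power_mult_distrib)
  finally show ?thesis .
qed

lemma dnp_prob_card_bad_set_ge_le:
  assumes Y: "Y \<subseteq> {..<n}" and p: "0 \<le> p" "p \<le> 1" and e: "0 < e" "e \<le> 1" "e \<le> \<epsilon>"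
  shows "dnp_prob n p (\<lambda>E. k \<le> card (bad_set n p \<epsilon> E Y))
       \<le> (4 * real n * exp (-(real (card Y) * p * e^2 / 4))) ^ k"
proof -
  define B where "B = 4 * exp (-(real (card Y) * p * e^2 / 4))"
  define \<S> where "\<S> = {S. S \<subseteq> {..<n} - Y \<and> card S = k}"
  have "dnp_prob n p (\<lambda>E. k \<le> card (bad_set n p \<epsilon> E Y))
      \<le> (\<Sum>S\<in>\<S>. dnp_prob n p (\<lambda>E. S \<subseteq> bad_set n p \<epsilon> E Y))"
  proof (rule dnp_prob_union_bound[OF p])
    show "finite \<S>" unfolding \<S>_def by (rule finite_subset[of _ "Pow {..<n}"]) auto
    fix E assume "k \<le> card (bad_set n p \<epsilon> E Y)"
    then obtain S where "S \<subseteq> bad_set n p \<epsilon> E Y" "card S = k"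
      by (meson obtain_subset_with_card_n)
    then show "\<exists>S\<in>\<S>. S \<subseteq> bad_set n p \<epsilon> E Y" unfolding \<S>_def bad_set_def by auto
  qed
  also have "\<dots> \<le> real (card \<S>) * B ^ k"
    using dnp_prob_subset_bad_set_le[OF Y _ p e] by (intro sum_bounded_above) (auto simp: \<S>_def B_def)
  also have "\<dots> \<le> real n ^ k * B ^ k"
  proof (rule mult_right_mono)
    have "card \<S> = card ({..<n} - Y) choose k" unfolding \<S>_def by (rule n_subsets) simp
    also have "\<dots> \<le> card ({..<n} - Y) ^ k"
      by (metis binomial_fact_pow fact_ge_1 le_trans mult.right_neutral mult_le_mono2)
    also have "\<dots> \<le> n ^ k" by (intro power_mono) (auto intro: order.trans[OF card_mono[of "{..<n}"]])
    finally show "real (card \<S>) \<le> real n ^ k" by (metis of_nat_le_iff of_nat_power)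
  qed (simp add: B_def)
  finally show ?thesis by (simp add: B_def power_mult_distrib mult_ac)
qed

lemma dnp_prob_large_bad_set_le:
  fixes c :: real
  assumes p: "0 \<le> p" "p \<le> 1" and e: "0 < e" "e \<le> 1" "e \<le> \<epsilon>"
  shows "dnp_prob n p (\<lambda>E. \<exists>Y. Y \<subseteq> {..<n} \<and> c * real n \<le> real (card Y) \<and> k \<le> card (bad_set n p \<epsilon> E Y))
       \<le> 2 ^ n * (4 * real n * exp (-(c * real n * p * e^2 / 4))) ^ k"
proof -
  define \<Y> where "\<Y> = {Y \<in> Pow {..<n}. c * real n \<le> real (card Y)}"
  have "dnp_prob n p (\<lambda>E. \<exists>Y. Y \<subseteq> {..<n} \<and> c * real n \<le> real (card Y) \<and> k \<le> card (bad_set n p \<epsilon> E Y))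
      \<le> (\<Sum>Y\<in>\<Y>. dnp_prob n p (\<lambda>E. k \<le> card (bad_set n p \<epsilon> E Y)))"
    by (rule dnp_prob_union_bound[OF p]) (auto simp: \<Y>_def)
  also have "\<dots> \<le> real (card \<Y>) * (4 * real n * exp (-(c * real n * p * e^2 / 4))) ^ k"
  proof (rule sum_bounded_above)
    fix Y assume "Y \<in> \<Y>"
    then have Y: "Y \<subseteq> {..<n}" and cY: "c * real n \<le> real (card Y)" by (auto simp: \<Y>_def)
    have "exp (-(real (card Y) * p * e^2 / 4)) \<le> exp (-(c * real n * p * e^2 / 4))"
      using cY p by (simp add: mult_right_mono)
    then have "(4 * real n * exp (-(real (card Y) * p * e^2 / 4))) ^ k \<le> (4 * real n * exp (-(c * real n * p * e^2 / 4))) ^ k"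
      by (intro power_mono mult_left_mono) auto
    with dnp_prob_card_bad_set_ge_le[OF Y p e, of k] show "dnp_prob n p (\<lambda>E. k \<le> card (bad_set n p \<epsilon> E Y))
        \<le> (4 * real n * exp (-(c * real n * p * e^2 / 4))) ^ k" by (rule order.trans)
  qed
  also have "\<dots> \<le> 2 ^ n * (4 * real n * exp (-(c * real n * p * e^2 / 4))) ^ k"
  proof (rule mult_right_mono)
    have "card \<Y> \<le> card (Pow {..<n})" unfolding \<Y>_def by (intro card_mono) auto
    then show "real (card \<Y>) \<le> 2 ^ n" by (simp add: card_Pow)
  qed simp
  finally show ?thesis .
qed

lemma union_estimate_le_exp:
  fixes d p :: real and n k :: nat
  assumes n: "4 \<le> n" and d: "0 < d" and p: "0 < p"
    and lnp: "ln n \<le> d / 4 * (n * p)" and T: "2 * (ln 2 + 1) / d \<le> ln n" and k: "ln n / p \<le> k"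
  shows "2 ^ n * (4 * real n * exp (-(d * n * p))) ^ k \<le> exp (- real n)"
proof -
  have "ln (4 * real n) = ln 4 + ln n" using n by (simp add: ln_mult)
  moreover have "ln 4 \<le> ln (real n)" using n by simp
  ultimately have "ln (4 * real n) \<le> d * n * p / 2" using lnp by linarith
  then have "exp (ln (4 * real n)) * exp (-(d * n * p)) \<le> exp (-(d * n * p / 2))"
    by (simp add: exp_add[symmetric])
  then have "4 * real n * exp (-(d * n * p)) \<le> exp (-(d * n * p / 2))"
    using n by simp
  then have "(4 * real n * exp (-(d * n * p))) ^ k \<le> exp (-(d * n * p / 2)) ^ k"
    by (intro power_mono) auto
  also have "\<dots> = exp (-(d * n / 2 * (k * p)))" by (simp add: exp_of_nat_mult[symmetric] ac_simps)
  also have "\<dots> \<le> exp (-(d * n / 2 * ln n))"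
    using k p d by (simp add: divide_le_eq mult_left_mono)
  finally have "2 ^ n * (4 * real n * exp (-(d * n * p))) ^ k \<le> 2 ^ n * exp (-(d * n / 2 * ln n))"
    by (simp add: mult_left_mono)
  also have "\<dots> = exp (n * ln 2) * exp (-(d * n / 2 * ln n))" by (simp add: exp_of_nat_mult)
  also have "\<dots> \<le> exp (- real n)"
  proof -
    have "2 * (ln 2 + 1) \<le> d * ln n" using T d by (simp add: divide_le_eq mult.commute)
    then have "real n * (2 * (ln 2 + 1)) \<le> real n * (d * ln n)" by (rule mult_left_mono) simp
    then have "n * ln 2 - d * n / 2 * ln n \<le> - real n" by (simp add: algebra_simps)
    then show ?thesis by (simp add: exp_add[symmetric])
  qed
  finally show ?thesis .
qed

lemma dnp_prob_large_bad_set_le_exp: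
  fixes c e :: real
  assumes p: "0 \<le> p" "p \<le> 1" and e: "0 < e" "e \<le> 1" "e \<le> \<epsilon>" and c: "0 < c"
    and n: "4 \<le> n" "ln n / n \<le> c * e^2 / 16 * p" "8 * (ln 2 + 1) / (c * e^2) \<le> ln n"
  shows "dnp_prob n p (\<lambda>E. \<exists>Y. Y \<subseteq> {..<n} \<and> c * real n \<le> real (card Y)
            \<and> ln n / p < real (card (bad_set n p \<epsilon> E Y))) \<le> exp (- real n)"
proof -
  have lnp: "ln n \<le> c * e^2 / 16 * (n * p)" using n(1,2) by (simp add: divide_le_eq ac_simps)
  have "0 < ln (real n)" using n(1) by simp
  then have p0: "0 < p" using lnp p(1) by (cases "p = 0") auto
  define k where "k = nat \<lfloor>ln n / p\<rfloor> + 1"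
  have k: "ln n / p \<le> k" unfolding k_def by linarith
  have k_le: "k \<le> r" if "ln n / p < real r" for r :: nat
  proof -
    have "0 \<le> \<lfloor>ln n / p\<rfloor>" "\<lfloor>ln n / p\<rfloor> < int r"
      using that \<open>0 < ln n\<close> p0 by (simp_all add: floor_less_iff)
    then show ?thesis unfolding k_def by (simp add: Suc_le_eq nat_less_iff)
  qed
  have "dnp_prob n p (\<lambda>E. \<exists>Y. Y \<subseteq> {..<n} \<and> c * real n \<le> real (card Y)
            \<and> ln n / p < real (card (bad_set n p \<epsilon> E Y)))
      \<le> dnp_prob n p (\<lambda>E. \<exists>Y. Y \<subseteq> {..<n} \<and> c * real n \<le> real (card Y)
            \<and> k \<le> card (bad_set n p \<epsilon> E Y))"
    using k_le by (intro dnp_prob_mono[OF p]) blast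
  also have "\<dots> \<le> 2 ^ n * (4 * real n * exp (-(c * e^2 / 4 * n * p))) ^ k"
    using dnp_prob_large_bad_set_le[OF p e, of n c k] by (simp add: ac_simps)
  also have "\<dots> \<le> exp (- real n)"
    using c e n lnp k by (intro union_estimate_le_exp[OF n(1) _ p0]) (auto simp: field_simps)
  finally show ?thesis .
qed

theorem lemma4p1:
  fixes p :: "nat \<Rightarrow> real" and \<epsilon> c :: real
  assumes "(\<lambda>n. ln (real n) / real n) \<in> o(p)"
    and "\<And>n. 0 \<le> p n \<and> p n \<le> 1"
    and "\<epsilon> > 0" and "c > 0"
  shows "(\<lambda>n. dnp_prob n (p n)
            (\<lambda>E. \<forall>Y. Y \<subseteq> {..<n} \<and> real (card Y) \<ge> c * real n \<longrightarrow>
                   real (card (bad_set n (p n) \<epsilon> E Y)) \<le> ln (real n) / p n))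
         \<longlonglongrightarrow> 1"
proof -
  define e where "e = min \<epsilon> 1"
  have e: "0 < e" "e \<le> 1" "e \<le> \<epsilon>" using assms(3) by (auto simp: e_def)
  define q where "q n = dnp_prob n (p n) (\<lambda>E. \<exists>Y. Y \<subseteq> {..<n} \<and> c * real n \<le> real (card Y)
            \<and> ln n / p n < real (card (bad_set n (p n) \<epsilon> E Y)))" for n
  have "\<forall>\<^sub>F n in sequentially. \<bar>ln n / n\<bar> \<le> c * e^2 / 16 * \<bar>p n\<bar>"
    using landau_o.smallD[OF assms(1), of "c * e^2 / 16"] assms(4) e by simp
  moreover have "\<forall>\<^sub>F n in sequentially. 8 * (ln 2 + 1) / (c * e^2) \<le> ln (real n)"
    using filterlim_compose[OF ln_at_top filterlim_real_sequentially] by (simp add: filterlim_at_top)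
  ultimately have "\<forall>\<^sub>F n in sequentially. 0 \<le> q n \<and> q n \<le> exp (- real n)"
    using eventually_ge_at_top[of 4]
  proof eventually_elim
    case (elim n)
    have p: "0 \<le> p n" "p n \<le> 1" using assms(2) by auto
    then show ?case
      using dnp_prob_large_bad_set_le_exp[OF p e assms(4) elim(3) _ elim(2)] elim(1,3)
      unfolding q_def by (simp add: dnp_prob_nonneg)
  qed
  then have "q \<longlonglongrightarrow> 0"
    by (intro tendsto_sandwich[of "\<lambda>_. 0" q _ "\<lambda>n. exp (- real n)"])
       (auto elim: eventually_mono intro: filterlim_compose[OF exp_at_bot]
         simp: filterlim_uminus_at_bot filterlim_real_sequentially)
  then have "(\<lambda>n. 1 - q n) \<longlonglongrightarrow> 1" using tendsto_diff[of "\<lambda>_. 1" 1 _ q 0] by simp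
  moreover have "1 - q n = dnp_prob n (p n) (\<lambda>E. \<forall>Y. Y \<subseteq> {..<n} \<and> real (card Y) \<ge> c * real n \<longrightarrow>
                   real (card (bad_set n (p n) \<epsilon> E Y)) \<le> ln (real n) / p n)" for n
    unfolding q_def dnp_prob_not[symmetric] by (intro arg_cong[where f="dnp_prob n (p n)"] ext) auto
  ultimately show ?thesis by simp
qed

end
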